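(* Let $W=\mathfrak S_n$ with simple reflections $s_i=(i,i+1)$, $1\le i\le n-1$, let $w_0$ be the longest element of $W$, $I=\{s_1,\dots,s_{n-2}\}$ and $w_I$ the longest element of the parabolic subgroup $W_I$. Then in $\mathcal H_v(W)$ $$C'_{s_1w_0}=v^{-1}C'_{w_0}-v^{-1}\,t_{s_1s_2\cdots s_{n-1}}\,C'_{w_I}.$$
   Context: $\mathcal H_v(W)$ is the Iwahori–Hecke algebra of $W$ over $\mathbb Z[v,v^{-1}]$ with standard basis $(t_w)_{w\in W}$ satisfying $(t_s+v)(t_s-v^{-1})=0$ for each simple reflection $s$, and $(C'_w)_{w\in W}$ is its Kazhdan–Lusztig basis, normalized so that $C'_s=t_s+v$ for simple $s$. *)

theory Defs
  imports "HOL-Library.Poly_Mapping" "HOL-Combinatorics.Permutations" "HOL-Combinatorics.Transposition"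
begin

section \<open>Laurent polynomials Z[v,v^-1] as the group ring Z[Z]\<close>

type_synonym lpoly = "int \<Rightarrow>\<^sub>0 int"

definition vv :: lpoly where "vv = Poly_Mapping.single 1 1"
definition vinv :: lpoly where "vinv = Poly_Mapping.single (-1) 1"

definition lbar :: "lpoly \<Rightarrow> lpoly" where "lbar f = Poly_Mapping.map_key uminus f"

definition in_vZv :: "lpoly \<Rightarrow> bool" where
  "in_vZv f \<longleftrightarrow> (\<forall>k. k \<le> 0 \<longrightarrow> Poly_Mapping.lookup f k = 0)"

type_synonym perm = "nat \<Rightarrow> nat"

definition Sn :: "nat \<Rightarrow> perm set" where "Sn n = {p. p permutes {1..n}}"

definition sref :: "nat \<Rightarrow> perm" where "sref i = transpose i (Suc i)"

definition wprod :: "nat list \<Rightarrow> perm" where "wprod xs = foldr (\<lambda>i p. sref i \<circ> p) xs id"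

text \<open>Coxeter length = number of inversions\<close>
definition len :: "nat \<Rightarrow> perm \<Rightarrow> nat" where
  "len n w = card {(i,j). i \<in> {1..n} \<and> j \<in> {1..n} \<and> i < j \<and> w j < w i}"

definition rw :: "nat \<Rightarrow> perm \<Rightarrow> nat list" where
  "rw n w = (SOME xs. set xs \<subseteq> {1..<n} \<and> wprod xs = w \<and> length xs = len n w)"

definition parab :: "nat set \<Rightarrow> perm set" where
  "parab J = {wprod xs | xs. set xs \<subseteq> J}"

definition longest :: "nat \<Rightarrow> nat set \<Rightarrow> perm" where
  "longest n J = (THE w. w \<in> parab J \<and> (\<forall>u \<in> parab J. len n u \<le> len n w))"

text \<open>An element is its coefficient function w.r.t. the standard basis (t_w);
  coefficients of non-elements of S_n are zero.\<close>
type_synonym hecke = "perm \<Rightarrow> lpoly"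

definition tb :: "nat \<Rightarrow> perm \<Rightarrow> hecke" where
  "tb n w = (\<lambda>x. if x = w \<and> w \<in> Sn n then 1 else 0)"

definition hone :: "nat \<Rightarrow> hecke" where "hone n = tb n id"

definition hadd :: "hecke \<Rightarrow> hecke \<Rightarrow> hecke" where "hadd a b = (\<lambda>x. a x + b x)"
definition hsub :: "hecke \<Rightarrow> hecke \<Rightarrow> hecke" where "hsub a b = (\<lambda>x. a x - b x)"
definition hscale :: "lpoly \<Rightarrow> hecke \<Rightarrow> hecke" where "hscale c a = (\<lambda>x. c * a x)"

text \<open>Left multiplication by t_{s_i}, using
  t_s t_w = t_{sw} if l(sw) > l(w), and t_s t_w = t_{sw} + (v^-1 - v) t_w otherwise
  (equivalent to (t_s + v)(t_s - v^-1) = 0 together with t_s t_w = t_{sw} for l(sw) > l(w)).\<close>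
definition Ls :: "nat \<Rightarrow> nat \<Rightarrow> hecke \<Rightarrow> hecke" where
  "Ls n i h = (\<lambda>x. h (sref i \<circ> x) +
      (if len n (sref i \<circ> x) < len n x then (vinv - vv) * h x else 0))"

text \<open>Left multiplication by t_w = t_{s_{i1}} ... t_{s_{ik}} (reduced word).\<close>
definition Tw :: "nat \<Rightarrow> perm \<Rightarrow> hecke \<Rightarrow> hecke" where
  "Tw n w h = foldr (Ls n) (rw n w) h"

definition hmult :: "nat \<Rightarrow> hecke \<Rightarrow> hecke \<Rightarrow> hecke" where
  "hmult n a b = (\<lambda>x. \<Sum>w\<in>Sn n. a w * Tw n w b x)"

text \<open>Bar involution: the ring involution with v -> v^-1 and t_s -> t_s^-1 = t_s + v - v^-1;
  hence bar(t_w) = bar(t_{s_{i1}}) ... bar(t_{s_{ik}}) for a reduced word.\<close>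
definition barT :: "nat \<Rightarrow> perm \<Rightarrow> hecke" where
  "barT n w = foldr (\<lambda>i h. hadd (Ls n i h) (hscale (vv - vinv) h)) (rw n w) (hone n)"

definition hbar :: "nat \<Rightarrow> hecke \<Rightarrow> hecke" where
  "hbar n h = (\<lambda>x. \<Sum>w\<in>Sn n. lbar (h w) * barT n w x)"

definition KL :: "nat \<Rightarrow> perm \<Rightarrow> hecke" where
  "KL n w = (THE c. (\<forall>x. x \<notin> Sn n \<longrightarrow> c x = 0) \<and> hbar n c = c \<and> c w = 1 \<and>
      (\<forall>y \<in> Sn n. y \<noteq> w \<longrightarrow> in_vZv (c y)))"

end

theory Submission
  imports Defs
begin

text \<open>
  For \<open>m \<le> n\<close> let \<open>w\<^sub>m\<close> be the longest element of \<open>S\<^sub>m\<close> and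
  \<open>C\<^sub>m = \<Sum>\<^sub>x\<^sub>\<in>\<^sub>S\<^sub>m v^(l(w\<^sub>m) - l(x)) t\<^sub>x\<close>.
  Up to a scalar, \<open>C\<^sub>m\<close> is the only element supported on \<open>S\<^sub>m\<close> with
  \<open>t\<^sub>s C\<^sub>m = v\<^sup>-\<^sup>1 C\<^sub>m\<close> for the simple reflections \<open>s\<close> of \<open>S\<^sub>m\<close>; the bar involution
  preserves this eigenvector property, so \<open>C\<^sub>m\<close> is bar invariant and equals \<open>C'\<^sub>w\<^sub>m\<close>.
  Applying \<open>t\<^sub>s\<^sub>1 \<dots> t\<^sub>s\<^sub>n\<^sub>-\<^sub>1\<close> to \<open>C\<^sub>n\<^sub>-\<^sub>1\<close> one factor at a time gives the element supported on
  \<open>{x. x(n) = 1}\<close> with coefficients \<open>v^(l(w\<^sub>0) - l(x))\<close>, and its bar image is computed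
  in the same way from \<open>t\<^sub>s\<^sup>-\<^sup>1 = t\<^sub>s + v - v\<^sup>-\<^sup>1\<close>.
  Therefore the right-hand side equals \<open>\<Sum>\<^sub>x\<^sub>(\<^sub>n\<^sub>)\<^sub>\<noteq>\<^sub>1 v^(l(w\<^sub>0) - 1 - l(x)) t\<^sub>x\<close>, which is bar invariant,
  has coefficient 1 at \<open>s\<^sub>1 w\<^sub>0\<close> (the only element of length \<open>l(w\<^sub>0) - 1\<close> with
  \<open>x(n) \<noteq> 1\<close>) and coefficients in \<open>vZ[v]\<close> elsewhere; hence it is \<open>C'\<^sub>s\<^sub>1\<^sub>w\<^sub>0\<close>.
\<close>

definition vpow :: "int \<Rightarrow> lpoly" where "vpow k = Poly_Mapping.single k 1"

lemma lookup_lbar: "Poly_Mapping.lookup (lbar f) k = Poly_Mapping.lookup f (-k)"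
proof -
  have inj: "inj (uminus :: int \<Rightarrow> int)" by (simp add: inj_def)
  show ?thesis unfolding lbar_def map_key.rep_eq[OF inj] by simp
qed

lemma lbar_add: "lbar (f + g) = lbar f + lbar g"
  by (rule poly_mapping_eqI) (simp add: lookup_lbar lookup_add)

lemma lbar_minus: "lbar (f - g) = lbar f - lbar g"
  by (rule poly_mapping_eqI) (simp add: lookup_lbar lookup_minus)

lemma lbar_zero [simp]: "lbar 0 = 0"
  by (rule poly_mapping_eqI) (simp add: lookup_lbar)

lemma Sum_any_uminus_reindex:
  fixes f :: "int \<Rightarrow> int"
  shows "(\<Sum>q. f (- q)) = (\<Sum>q. f q)"
  by (rule Sum_any.reindex_cong[where l=uminus]) (auto simp: bij_uminus)

lemma lbar_mult: "lbar (f * g) = lbar f * lbar g"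
proof (rule poly_mapping_eqI)
  fix k
  have inner: "(\<Sum>q. Poly_Mapping.lookup g q when - k = - l + q) =
      (\<Sum>q. Poly_Mapping.lookup g (- q) when k = l + q)" for l
  proof -
    have "(\<Sum>q. Poly_Mapping.lookup g q when - k = - l + q) =
        (\<Sum>q. Poly_Mapping.lookup g (- q) when - k = - l + - q)"
      by (rule Sum_any_uminus_reindex[symmetric])
    also have "\<dots> = (\<Sum>q. Poly_Mapping.lookup g (- q) when k = l + q)"
      by (rule Sum_any.cong) (auto simp: when_def)
    finally show ?thesis .
  qed
  have "Poly_Mapping.lookup (lbar f * lbar g) k =
      (\<Sum>l. Poly_Mapping.lookup f (- l) * (\<Sum>q. Poly_Mapping.lookup g (- q) when k = l + q))"
    by (simp add: lookup_mult lookup_lbar)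
  also have "\<dots> = (\<Sum>l. Poly_Mapping.lookup f (- l) * (\<Sum>q. Poly_Mapping.lookup g q when - k = - l + q))"
    by (simp only: inner)
  also have "\<dots> = (\<Sum>l. Poly_Mapping.lookup f l * (\<Sum>q. Poly_Mapping.lookup g q when - k = l + q))"
    by (rule Sum_any_uminus_reindex[of "\<lambda>l. Poly_Mapping.lookup f l *
          (\<Sum>q. Poly_Mapping.lookup g q when - k = l + q)"])
  also have "\<dots> = Poly_Mapping.lookup (lbar (f * g)) k"
    by (simp add: lookup_mult lookup_lbar)
  finally show "Poly_Mapping.lookup (lbar (f * g)) k = Poly_Mapping.lookup (lbar f * lbar g) k"
    by simp
qed

lemma lbar_vpow [simp]: "lbar (vpow k) = vpow (- k)"
  by (rule poly_mapping_eqI) (simp add: lookup_lbar vpow_def lookup_single when_def)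

lemma vpow_mult: "vpow a * vpow b = vpow (a + b)"
  by (simp add: vpow_def mult_single)

lemma vpow_0 [simp]: "vpow 0 = 1"
  by (simp add: vpow_def one_poly_mapping.abs_eq single.abs_eq)

lemma lbar_one [simp]: "lbar 1 = 1"
  using lbar_vpow[of 0] by simp

lemma vv_eq_vpow: "vv = vpow 1" and vinv_eq_vpow: "vinv = vpow (- 1)"
  by (simp_all add: vv_def vinv_def vpow_def)

lemma vv_mult_vinv: "vv * vinv = 1"
  by (simp add: vv_eq_vpow vinv_eq_vpow vpow_mult)

lemma vinv_mult_vpow: "vinv * vpow k = vpow (k - 1)"
  by (simp add: vinv_eq_vpow vpow_mult)

lemma vv_mult_vpow: "vv * vpow k = vpow (k + 1)"
  by (simp add: vv_eq_vpow vpow_mult add.commute)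

lemma vpow_add_vv_minus_vinv_mult: "vpow (k - 1) + (vv - vinv) * vpow k = vpow (k + 1)"
  by (simp add: vv_eq_vpow vinv_eq_vpow vpow_mult algebra_simps)

lemma in_vZv_lbar_eq_zero:
  assumes "in_vZv f" and "lbar f = f"
  shows "f = 0"
proof (rule poly_mapping_eqI)
  fix k
  show "Poly_Mapping.lookup f k = Poly_Mapping.lookup 0 k"
  proof (cases "k \<le> 0")
    case True
    then show ?thesis using assms(1) unfolding in_vZv_def by simp
  next
    case False
    have "Poly_Mapping.lookup f k = Poly_Mapping.lookup f (- k)"
      using assms(2) lookup_lbar[of f k] by simp
    then show ?thesis using assms(1) False unfolding in_vZv_def by simp
  qed
qed

lemma in_vZv_diff: "in_vZv f \<Longrightarrow> in_vZv g \<Longrightarrow> in_vZv (f - g)"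
  by (simp add: in_vZv_def lookup_minus)

lemma in_vZv_zero [simp]: "in_vZv 0"
  by (simp add: in_vZv_def)

lemma in_vZv_vpow: "0 < k \<Longrightarrow> in_vZv (vpow k)"
  by (simp add: in_vZv_def vpow_def lookup_single when_def)


section \<open>Permutations and their length\<close>

lemma sref_permutes: "1 \<le> i \<Longrightarrow> i < m \<Longrightarrow> sref i permutes {1..m}"
  unfolding sref_def by (rule permutes_swap_id) auto

lemma sref_sref [simp]: "sref i (sref i k) = k"
  by (simp add: sref_def)

lemma sref_sref_comp [simp]: "sref i \<circ> (sref i \<circ> x) = x"
  by (simp add: fun_eq_iff)

lemma comp_sref_sref [simp]: "(x \<circ> sref i) \<circ> sref i = x"
  by (simp add: fun_eq_iff)

lemma sref_less_sref_iff:
  assumes "p \<noteq> q" "\<not> (p = i \<and> q = Suc i)" "\<not> (p = Suc i \<and> q = i)"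
  shows "sref i p < sref i q \<longleftrightarrow> p < q"
  using assms unfolding sref_def transpose_def by auto

lemma Sn_id [simp]: "id \<in> Sn n"
  by (simp add: Sn_def)

lemma Sn_finite [simp]: "finite (Sn n)"
  unfolding Sn_def by (rule finite_permutations) simp

lemma Sn_comp: "x \<in> Sn n \<Longrightarrow> y \<in> Sn n \<Longrightarrow> x \<circ> y \<in> Sn n"
  unfolding Sn_def mem_Collect_eq by (rule permutes_compose)

lemma Sn_sref_comp: "1 \<le> i \<Longrightarrow> i < m \<Longrightarrow> x \<in> Sn m \<Longrightarrow> sref i \<circ> x \<in> Sn m"
  unfolding Sn_def mem_Collect_eq by (rule permutes_compose[OF _ sref_permutes])

lemma Sn_comp_sref: "1 \<le> i \<Longrightarrow> i < m \<Longrightarrow> x \<in> Sn m \<Longrightarrow> x \<circ> sref i \<in> Sn m"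
  unfolding Sn_def mem_Collect_eq by (rule permutes_compose[OF sref_permutes])

lemma Sn_sref_comp_iff: "1 \<le> i \<Longrightarrow> i < m \<Longrightarrow> sref i \<circ> x \<in> Sn m \<longleftrightarrow> x \<in> Sn m"
  using Sn_sref_comp[of i m x] Sn_sref_comp[of i m "sref i \<circ> x"] by auto

lemma Sn_comp_sref_iff: "1 \<le> i \<Longrightarrow> i < m \<Longrightarrow> x \<circ> sref i \<in> Sn m \<longleftrightarrow> x \<in> Sn m"
  using Sn_comp_sref[of i m x] Sn_comp_sref[of i m "x \<circ> sref i"] by auto

lemma Sn_mono: "m \<le> n \<Longrightarrow> x \<in> Sn m \<Longrightarrow> x \<in> Sn n"
  unfolding Sn_def mem_Collect_eq by (erule permutes_subset) simp

lemma Sn_inj: "x \<in> Sn n \<Longrightarrow> x a = x b \<Longrightarrow> a = b"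
  using permutes_inj[of x "{1..n}"] unfolding Sn_def inj_def by blast

lemma Sn_range: "x \<in> Sn n \<Longrightarrow> a \<in> {1..n} \<Longrightarrow> x a \<in> {1..n}"
  using permutes_in_image[of x "{1..n}" a] by (simp add: Sn_def)

lemma Sn_fixes: "x \<in> Sn n \<Longrightarrow> a \<notin> {1..n} \<Longrightarrow> x a = a"
  using permutes_not_in[of x "{1..n}" a] by (simp add: Sn_def)

lemma Sn_inv: "x \<in> Sn n \<Longrightarrow> inv x \<in> Sn n"
  by (simp add: Sn_def permutes_inv)

lemma Sn_apply_inv: "x \<in> Sn n \<Longrightarrow> x (inv x k) = k"
  unfolding Sn_def mem_Collect_eq by (rule permutes_inverses(1))

lemma Sn_inv_apply: "x \<in> Sn n \<Longrightarrow> inv x (x k) = k"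
  unfolding Sn_def mem_Collect_eq by (rule permutes_inverses(2))

lemma inv_comp_sref: "x \<in> Sn n \<Longrightarrow> inv (x \<circ> sref j) = sref j \<circ> inv x"
  using o_inv_distrib[of x "sref j"] by (simp add: Sn_def permutes_bij sref_def)

lemma Sn_pred_iff:
  assumes "1 \<le> n"
  shows "x \<in> Sn (n - 1) \<longleftrightarrow> x \<in> Sn n \<and> x n = n"
proof
  assume x: "x \<in> Sn (n - 1)"
  then show "x \<in> Sn n \<and> x n = n" using assms Sn_mono[OF _ x, of n] Sn_fixes[OF x, of n] by simp
next
  assume x: "x \<in> Sn n \<and> x n = n"
  show "x \<in> Sn (n - 1)" unfolding Sn_def mem_Collect_eq
  proof (rule inj_imp_permutes)
    show "inj_on x {1..n - 1}" using Sn_inj[of x n] x by (auto intro: inj_onI)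
    fix k
    show "x k \<in> {1..n - 1}" if "k \<in> {1..n - 1}"
      using that x Sn_range[of x n k] Sn_inj[of x n k n] by fastforce
    show "x k = k" if "k \<notin> {1..n - 1}"
      using that x Sn_fixes[of x n k] by (cases "k = n") auto
  qed simp
qed

definition inversions :: "nat \<Rightarrow> perm \<Rightarrow> (nat \<times> nat) set" where
  "inversions n x = {(i, j). i \<in> {1..n} \<and> j \<in> {1..n} \<and> i < j \<and> x j < x i}"

lemma len_eq_card_inversions: "len n x = card (inversions n x)"
  by (simp add: len_def inversions_def)

lemma mem_inversions:
  "(p, q) \<in> inversions n x \<longleftrightarrow> p \<in> {1..n} \<and> q \<in> {1..n} \<and> p < q \<and> x q < x p"
  by (simp add: inversions_def)

lemma finite_inversions [simp]: "finite (inversions n x)"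
  by (rule finite_subset[of _ "{1..n} \<times> {1..n}"]) (auto simp: inversions_def)

lemma len_id [simp]: "len n id = 0"
proof -
  have "inversions n id = {}" by (auto simp: inversions_def)
  then show ?thesis by (simp add: len_eq_card_inversions)
qed

lemma inversions_sref_comp:
  assumes x: "x \<in> Sn n" and i: "1 \<le> i" "i < n" and ab: "x a = i" "x b = Suc i" "a < b"
  shows "inversions n (sref i \<circ> x) = insert (a, b) (inversions n x)"
proof (intro set_eqI, clarify)
  fix p q
  have a: "a \<in> {1..n}" and b: "b \<in> {1..n}"
    using ab i Sn_fixes[OF x, of a] Sn_fixes[OF x, of b] by fastforce+
  show "(p, q) \<in> inversions n (sref i \<circ> x) \<longleftrightarrow> (p, q) \<in> insert (a, b) (inversions n x)"
  proof (cases "p < q \<and> (p, q) \<noteq> (a, b)")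
    case True
    have "x p \<noteq> x q" "\<not> (x q = i \<and> x p = Suc i)" "\<not> (x q = Suc i \<and> x p = i)"
      using True ab Sn_inj[OF x] by (metis less_asym)+
    then have "sref i (x q) < sref i (x p) \<longleftrightarrow> x q < x p"
      by (intro sref_less_sref_iff) auto
    then show ?thesis using True unfolding mem_inversions insert_iff o_apply by blast
  next
    case False
    then show ?thesis using a b ab by (auto simp: sref_def mem_inversions)
  qed
qed

lemma len_sref_comp_up:
  assumes x: "x \<in> Sn n" and i: "1 \<le> i" "i < n" and ab: "x a = i" "x b = Suc i" "a < b"
  shows "len n (sref i \<circ> x) = Suc (len n x)"
proof -
  have "(a, b) \<notin> inversions n x" using ab unfolding mem_inversions by simp
  then show ?thesis unfolding len_eq_card_inversions inversions_sref_comp[OF assms] by simp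
qed

lemma len_sref_comp_down:
  assumes x: "x \<in> Sn n" and i: "1 \<le> i" "i < n" and ab: "x a = Suc i" "x b = i" "a < b"
  shows "len n x = Suc (len n (sref i \<circ> x))"
proof -
  have "len n (sref i \<circ> (sref i \<circ> x)) = Suc (len n (sref i \<circ> x))"
    by (rule len_sref_comp_up[OF Sn_sref_comp[OF i x] i, of a b]) (simp_all add: sref_def ab)
  then show ?thesis by simp
qed

definition left_ascent :: "perm \<Rightarrow> nat \<Rightarrow> bool" where
  "left_ascent x i \<longleftrightarrow> (\<exists>a b. x a = i \<and> x b = Suc i \<and> a < b)"

lemma left_ascent_iff: "x \<in> Sn n \<Longrightarrow> left_ascent x i \<longleftrightarrow> inv x i < inv x (Suc i)"
  unfolding left_ascent_def using Sn_apply_inv[of x n] Sn_inv_apply[of x n] by metis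

lemma len_sref_comp_left_ascent:
  assumes "x \<in> Sn n" "1 \<le> i" "i < n" "left_ascent x i"
  shows "len n (sref i \<circ> x) = Suc (len n x)"
  using assms len_sref_comp_up[OF assms(1-3)] unfolding left_ascent_def by blast

lemma len_sref_comp_not_left_ascent:
  assumes x: "x \<in> Sn n" and i: "1 \<le> i" "i < n" and "\<not> left_ascent x i"
  shows "len n x = Suc (len n (sref i \<circ> x))"
proof -
  have "x (inv x (Suc i)) = Suc i" "x (inv x i) = i" using Sn_apply_inv[OF x] by simp_all
  moreover have "inv x (Suc i) < inv x i"
    using assms(4) Sn_inj[OF Sn_inv[OF x], of i "Suc i"] left_ascent_iff[OF x] by fastforce
  ultimately show ?thesis by (rule len_sref_comp_down[OF x i])
qed

lemma len_sref_comp_cases: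
  assumes "x \<in> Sn n" "1 \<le> i" "i < n"
  shows "len n (sref i \<circ> x) = Suc (len n x) \<or> len n x = Suc (len n (sref i \<circ> x))"
  using len_sref_comp_left_ascent[OF assms] len_sref_comp_not_left_ascent[OF assms] by blast

lemma len_sref_comp_less_iff:
  assumes "x \<in> Sn n" "1 \<le> i" "i < n"
  shows "len n (sref i \<circ> x) < len n x \<longleftrightarrow> \<not> left_ascent x i"
  using len_sref_comp_left_ascent[OF assms] len_sref_comp_not_left_ascent[OF assms]
  by (cases "left_ascent x i") auto

lemma len_inv_le:
  assumes x: "x \<in> Sn n"
  shows "len n (inv x) \<le> len n x"
proof -
  define f where "f pq = (inv x (snd pq), inv x (fst pq))" for pq
  have ix: "inv x \<in> Sn n" by (rule Sn_inv[OF x])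
  have "inj_on f (inversions n (inv x))"
    by (rule inj_onI) (auto simp: f_def prod_eq_iff dest: Sn_inj[OF ix])
  moreover have "f ` inversions n (inv x) \<subseteq> inversions n x"
    using Sn_range[OF ix] Sn_apply_inv[OF x] by (fastforce simp: f_def mem_inversions)
  ultimately show ?thesis
    unfolding len_eq_card_inversions by (intro card_inj_on_le) auto
qed

lemma len_inv: "x \<in> Sn n \<Longrightarrow> len n (inv x) = len n x"
  using len_inv_le[of x n] len_inv_le[of "inv x" n] Sn_inv[of x n]
  by (simp add: Sn_def permutes_inv_inv)

lemma len_comp_sref_up:
  assumes x: "x \<in> Sn n" and j: "1 \<le> j" "j < n" and lt: "x j < x (Suc j)"
  shows "len n (x \<circ> sref j) = Suc (len n x)"
proof -
  have "len n (sref j \<circ> inv x) = Suc (len n (inv x))"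
    by (rule len_sref_comp_up[OF Sn_inv[OF x] j _ _ lt]) (simp_all add: Sn_inv_apply[OF x])
  then show ?thesis
    using len_inv[OF Sn_comp_sref[OF j x]] len_inv[OF x] inv_comp_sref[OF x] by simp
qed

lemma len_comp_sref_cases:
  assumes x: "x \<in> Sn n" and j: "1 \<le> j" "j < n"
  shows "x j < x (Suc j) \<and> len n (x \<circ> sref j) = Suc (len n x) \<or>
         x (Suc j) < x j \<and> len n x = Suc (len n (x \<circ> sref j))"
proof (cases "x j < x (Suc j)")
  case True
  then show ?thesis using len_comp_sref_up[OF x j] by simp
next
  case False
  then have "x (Suc j) < x j" using Sn_inj[OF x, of j "Suc j"] by fastforce
  then have "len n ((x \<circ> sref j) \<circ> sref j) = Suc (len n (x \<circ> sref j))"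
    by (intro len_comp_sref_up[OF Sn_comp_sref[OF j x] j]) (simp add: sref_def)
  then show ?thesis using \<open>x (Suc j) < x j\<close> by simp
qed

lemma len_comp_sref_less_iff:
  assumes "x \<in> Sn n" "1 \<le> j" "j < n"
  shows "len n (x \<circ> sref j) < len n x \<longleftrightarrow> x (Suc j) < x j"
  using len_comp_sref_cases[OF assms] by auto


section \<open>Words, reduced words and the longest element\<close>

lemma wprod_Nil [simp]: "wprod [] = id"
  by (simp add: wprod_def)

lemma wprod_Cons [simp]: "wprod (i # xs) = sref i \<circ> wprod xs"
  by (simp add: wprod_def)

lemma wprod_append: "wprod (xs @ ys) = wprod xs \<circ> wprod ys"
  by (induction xs) (simp_all add: o_assoc)

lemma wprod_Sn: "set xs \<subseteq> {1..<m} \<Longrightarrow> wprod xs \<in> Sn m"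
  by (induction xs) (auto intro: Sn_sref_comp)

lemma wprod_rev: "wprod (rev xs) = inv (wprod xs)"
proof -
  have "wprod (rev xs) \<circ> wprod xs = id" for xs
    by (induction xs) (simp_all add: wprod_append o_assoc)
  from this[of xs] this[of "rev xs"] show ?thesis
    by (intro inv_unique_comp[symmetric]) simp_all
qed

lemma len_wprod_le: "set xs \<subseteq> {1..<n} \<Longrightarrow> len n (wprod xs) \<le> length xs"
proof (induction xs)
  case (Cons i xs)
  then have "len n (sref i \<circ> wprod xs) \<le> Suc (len n (wprod xs))" "len n (wprod xs) \<le> length xs"
    using len_sref_comp_cases[OF wprod_Sn, of xs n i] by fastforce+
  then show ?case unfolding wprod_Cons length_Cons by linarith
qed simp

definition reduced :: "nat \<Rightarrow> nat list \<Rightarrow> bool" where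
  "reduced n xs \<longleftrightarrow> set xs \<subseteq> {1..<n} \<and> len n (wprod xs) = length xs"

lemma reduced_Cons: "reduced n (i # xs) \<Longrightarrow> reduced n xs"
  unfolding reduced_def
  using len_wprod_le[of xs n] len_sref_comp_cases[OF wprod_Sn, of xs n i] by fastforce

lemma reduced_rev: "reduced n xs \<Longrightarrow> reduced n (rev xs)"
  unfolding reduced_def wprod_rev using len_inv[OF wprod_Sn, of xs n] by simp

lemma increasing_Sn_eq_id:
  assumes x: "x \<in> Sn m" and inc: "\<And>j. 1 \<le> j \<Longrightarrow> j < m \<Longrightarrow> x j < x (Suc j)"
  shows "x = id"
proof
  fix k
  have lower: "k \<le> x k" if "k \<in> {1..m}" for k
    using that
  proof (induction k)
    case (Suc k)
    then show ?case
      using Sn_range[OF x Suc.prems] inc[of k] by (cases "k = 0") fastforce+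
  qed simp
  have upper: "x (m - d) \<le> m - d" if "d < m" for d
    using that
  proof (induction d)
    case 0
    then show ?case using Sn_range[OF x, of m] by simp
  next
    case (Suc d)
    then show ?case using inc[of "m - Suc d"] Suc_diff_Suc[of d m] by fastforce
  qed
  show "x k = id k"
  proof (cases "k \<in> {1..m}")
    case True
    then show ?thesis using lower[OF True] upper[of "m - k"] by simp
  qed (simp add: Sn_fixes[OF x])
qed

definition rev_perm :: "nat \<Rightarrow> perm" where
  "rev_perm m k = (if k \<in> {1..m} then m + 1 - k else k)"

lemma rev_perm_rev_perm [simp]: "rev_perm m (rev_perm m k) = k"
  unfolding rev_perm_def by auto

lemma rev_perm_Sn: "rev_perm m \<in> Sn m"
  unfolding Sn_def mem_Collect_eq
  by (rule inj_imp_permutes) (auto simp: rev_perm_def inj_on_def)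

lemma decreasing_Sn_eq_rev_perm:
  assumes x: "x \<in> Sn m" and dec: "\<And>j. 1 \<le> j \<Longrightarrow> j < m \<Longrightarrow> x (Suc j) < x j"
  shows "x = rev_perm m"
proof -
  have "rev_perm m \<circ> x = id"
  proof (rule increasing_Sn_eq_id)
    show "rev_perm m \<circ> x \<in> Sn m" by (rule Sn_comp[OF rev_perm_Sn x])
    fix j assume j: "1 \<le> j" "j < m"
    then have "x j \<in> {1..m}" "x (Suc j) \<in> {1..m}"
      using Sn_range[OF x, of j] Sn_range[OF x, of "Suc j"] by auto
    then show "(rev_perm m \<circ> x) j < (rev_perm m \<circ> x) (Suc j)"
      using dec[OF j] by (auto simp: rev_perm_def)
  qed
  then show ?thesis by (metis comp_apply id_apply rev_perm_rev_perm ext)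
qed

lemma no_left_ascent_eq_rev_perm:
  assumes u: "u \<in> Sn m" and no_asc: "\<And>i. 1 \<le> i \<Longrightarrow> i < m \<Longrightarrow> \<not> left_ascent u i"
  shows "u = rev_perm m"
proof -
  have "inv u (Suc i) < inv u i" if "1 \<le> i" "i < m" for i
    using no_asc[OF that] left_ascent_iff[OF u] Sn_inj[OF Sn_inv[OF u], of i "Suc i"]
    by fastforce
  then have "inv u = rev_perm m" by (rule decreasing_Sn_eq_rev_perm[OF Sn_inv[OF u]])
  then show ?thesis by (metis Sn_apply_inv[OF u] rev_perm_rev_perm ext)
qed

lemma left_ascent_exists:
  "u \<in> Sn m \<Longrightarrow> u \<noteq> rev_perm m \<Longrightarrow> \<exists>i. 1 \<le> i \<and> i < m \<and> left_ascent u i"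
  using no_left_ascent_eq_rev_perm by blast

lemma len_maximal_eq_rev_perm:
  assumes mn: "m \<le> n" and u: "u \<in> Sn m" and max: "\<And>w. w \<in> Sn m \<Longrightarrow> len n w \<le> len n u"
  shows "u = rev_perm m"
proof (rule no_left_ascent_eq_rev_perm[OF u])
  fix i assume i: "1 \<le> i" "i < m"
  show "\<not> left_ascent u i"
  proof
    assume "left_ascent u i"
    then have "len n (sref i \<circ> u) = Suc (len n u)"
      using len_sref_comp_left_ascent[OF Sn_mono[OF mn u]] i mn by simp
    then show False using max[OF Sn_sref_comp[OF i u]] by simp
  qed
qed

lemma len_le_rev_perm:
  assumes mn: "m \<le> n" and w: "w \<in> Sn m"
  shows "len n w \<le> len n (rev_perm m)"
proof -
  have fin: "finite (len n ` Sn m)" by simp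
  have ne: "len n ` Sn m \<noteq> {}" using Sn_id[of m] by blast
  obtain u where u: "u \<in> Sn m" "len n u = Max (len n ` Sn m)"
    using Max_in[OF fin ne] by (metis imageE)
  have max: "len n v \<le> len n u" if "v \<in> Sn m" for v using Max_ge[OF fin] that u by simp
  then have "u = rev_perm m" by (rule len_maximal_eq_rev_perm[OF mn u(1)])
  then show ?thesis using max[OF w] by simp
qed

lemma eq_rev_perm_if_len_eq:
  assumes "m \<le> n" "w \<in> Sn m" "len n w = len n (rev_perm m)"
  shows "w = rev_perm m"
  by (rule len_maximal_eq_rev_perm[OF assms(1,2)]) (use len_le_rev_perm[OF assms(1)] assms(3) in auto)

lemma reduced_word_exists:
  assumes mn: "m \<le> n" and w: "w \<in> Sn m"
  shows "\<exists>xs. set xs \<subseteq> {1..<m} \<and> wprod xs = w \<and> length xs = len n w"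
  using w
proof (induction "len n w" arbitrary: w rule: less_induct)
  case less
  show ?case
  proof (cases "\<forall>j. 1 \<le> j \<longrightarrow> j < m \<longrightarrow> w j < w (Suc j)")
    case True
    then have "w = id" using increasing_Sn_eq_id[OF less.prems] by blast
    then show ?thesis by (intro exI[of _ "[]"]) simp
  next
    case False
    then obtain j where j: "1 \<le> j" "j < m" "\<not> w j < w (Suc j)" by blast
    have len_w: "len n w = Suc (len n (w \<circ> sref j))"
      using len_comp_sref_cases[OF Sn_mono[OF mn less.prems] j(1)] j mn by auto
    obtain xs where "set xs \<subseteq> {1..<m}" "wprod xs = w \<circ> sref j" "length xs = len n (w \<circ> sref j)"
      using less.hyps[OF _ Sn_comp_sref[OF j(1,2) less.prems]] len_w by force
    then show ?thesis
      using j len_w by (intro exI[of _ "xs @ [j]"]) (simp add: wprod_append o_assoc)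
  qed
qed

lemma rw_spec:
  assumes "w \<in> Sn n"
  shows "set (rw n w) \<subseteq> {1..<n}" "wprod (rw n w) = w" "length (rw n w) = len n w"
  using someI_ex[OF reduced_word_exists[OF order_refl assms]] unfolding rw_def by auto

lemma reduced_rw: "w \<in> Sn n \<Longrightarrow> reduced n (rw n w)"
  using rw_spec[of w n] by (simp add: reduced_def)

lemma parab_eq_Sn: "parab {1..<m} = Sn m"
  unfolding parab_def using wprod_Sn reduced_word_exists[OF order_refl] by blast

lemma longest_eq_rev_perm:
  assumes "m \<le> n"
  shows "longest n {1..<m} = rev_perm m"
  unfolding longest_def parab_eq_Sn
  using rev_perm_Sn len_le_rev_perm[OF assms] len_maximal_eq_rev_perm[OF assms]
  by (intro the_equality) blast+


definition supported :: "nat \<Rightarrow> hecke \<Rightarrow> bool" where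
  "supported m h \<longleftrightarrow> (\<forall>x. x \<notin> Sn m \<longrightarrow> h x = 0)"

lemma supportedD: "supported m h \<Longrightarrow> x \<notin> Sn m \<Longrightarrow> h x = 0"
  by (simp add: supported_def)

lemma supported_tb: "supported n (tb n u)"
  by (simp add: supported_def tb_def)

text \<open>Left multiplication by \<open>t\<^sub>s\<^sub>i\<^sup>-\<^sup>1 = t\<^sub>s\<^sub>i + v - v\<^sup>-\<^sup>1\<close>, the bar image of \<open>t\<^sub>s\<^sub>i\<close>.\<close>

definition Ls_inv :: "nat \<Rightarrow> nat \<Rightarrow> hecke \<Rightarrow> hecke" where
  "Ls_inv n i h = hadd (Ls n i h) (hscale (vv - vinv) h)"

text \<open>Right multiplication by \<open>t\<^sub>s\<^sub>j\<close>; it commutes with every \<open>Ls\<close>, which is what makes left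
  multiplication along a reduced word independent of the word.\<close>

definition Rs :: "nat \<Rightarrow> nat \<Rightarrow> hecke \<Rightarrow> hecke" where
  "Rs n j h = (\<lambda>x. h (x \<circ> sref j) +
      (if len n (x \<circ> sref j) < len n x then (vinv - vv) * h x else 0))"

lemma Ls_apply:
  "Ls n i h x = h (sref i \<circ> x) + (if len n (sref i \<circ> x) < len n x then (vinv - vv) * h x else 0)"
  by (simp add: Ls_def)

lemma Ls_inv_apply:
  "Ls_inv n i h x = (if len n (sref i \<circ> x) < len n x then h (sref i \<circ> x)
     else h (sref i \<circ> x) + (vv - vinv) * h x)"
  by (simp add: Ls_inv_def Ls_def hadd_def hscale_def algebra_simps)

lemma Rs_apply:
  "Rs n j h x = h (x \<circ> sref j) + (if len n (x \<circ> sref j) < len n x then (vinv - vv) * h x else 0)"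
  by (simp add: Rs_def)

lemma barT_eq_foldr_Ls_inv: "barT n w = foldr (Ls_inv n) (rw n w) (tb n id)"
  unfolding barT_def Ls_inv_def[abs_def] hone_def ..

lemma supported_Ls: "supported m h \<Longrightarrow> 1 \<le> i \<Longrightarrow> i < m \<Longrightarrow> supported m (Ls n i h)"
  by (simp add: supported_def Ls_apply Sn_sref_comp_iff)

lemma supported_Ls_inv: "supported m h \<Longrightarrow> 1 \<le> i \<Longrightarrow> i < m \<Longrightarrow> supported m (Ls_inv n i h)"
  by (simp add: supported_def Ls_inv_apply Sn_sref_comp_iff)

lemma supported_Rs: "supported m h \<Longrightarrow> 1 \<le> j \<Longrightarrow> j < m \<Longrightarrow> supported m (Rs n j h)"
  by (simp add: supported_def Rs_apply Sn_comp_sref_iff)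

lemma supported_foldr_Ls:
  "supported m h \<Longrightarrow> set xs \<subseteq> {1..<m} \<Longrightarrow> supported m (foldr (Ls n) xs h)"
  by (induction xs) (auto intro: supported_Ls)

lemma supported_foldr_Ls_inv:
  "supported m h \<Longrightarrow> set xs \<subseteq> {1..<m} \<Longrightarrow> supported m (foldr (Ls_inv n) xs h)"
  by (induction xs) (auto intro: supported_Ls_inv)

lemma supported_foldr_Rs:
  "supported m h \<Longrightarrow> set xs \<subseteq> {1..<m} \<Longrightarrow> supported m (foldr (Rs n) xs h)"
  by (induction xs) (auto intro: supported_Rs)

lemma Ls_sum: "Ls n i (\<lambda>x. \<Sum>u\<in>A. a u * f u x) = (\<lambda>x. \<Sum>u\<in>A. a u * Ls n i (f u) x)"
  by (rule ext) (simp add: Ls_apply sum.distrib sum_distrib_left algebra_simps)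

lemma foldr_Ls_sum:
  "foldr (Ls n) xs (\<lambda>x. \<Sum>u\<in>A. a u * f u x) = (\<lambda>x. \<Sum>u\<in>A. a u * foldr (Ls n) xs (f u) x)"
  by (induction xs) (simp_all add: Ls_sum)

lemma Ls_inv_sum:
  "Ls_inv n i (\<lambda>x. \<Sum>u\<in>A. a u * f u x) = (\<lambda>x. \<Sum>u\<in>A. a u * Ls_inv n i (f u) x)"
  by (rule ext)
    (simp add: Ls_inv_def hadd_def hscale_def Ls_sum sum.distrib sum_subtractf sum_distrib_left algebra_simps)

lemma supported_expand:
  assumes "supported n g"
  shows "g = (\<lambda>x. \<Sum>u\<in>Sn n. g u * tb n u x)"
proof
  fix x
  have "(\<Sum>u\<in>Sn n. g u * tb n u x) = (\<Sum>u\<in>Sn n. if u = x then g x else 0)"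
    by (rule sum.cong) (auto simp: tb_def)
  then show "g x = (\<Sum>u\<in>Sn n. g u * tb n u x)"
    using supportedD[OF assms, of x] by simp
qed

lemma Ls_inv_Ls:
  assumes h: "supported n h" and i: "1 \<le> i" "i < n"
  shows "Ls_inv n i (Ls n i h) = h"
proof
  fix x
  show "Ls_inv n i (Ls n i h) x = h x"
  proof (cases "x \<in> Sn n")
    case False
    then show ?thesis using supportedD[OF h] Sn_sref_comp_iff[OF i, of x]
      by (simp add: Ls_inv_apply Ls_apply)
  next
    case True
    then show ?thesis using len_sref_comp_cases[OF True i]
      by (elim disjE) (simp_all add: Ls_inv_apply Ls_apply algebra_simps)
  qed
qed

lemma Ls_Ls_inv:
  assumes h: "supported n h" and i: "1 \<le> i" "i < n"
  shows "Ls n i (Ls_inv n i h) = h"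
proof
  fix x
  show "Ls n i (Ls_inv n i h) x = h x"
  proof (cases "x \<in> Sn n")
    case False
    then show ?thesis using supportedD[OF h] Sn_sref_comp_iff[OF i, of x]
      by (simp add: Ls_inv_apply Ls_apply)
  next
    case True
    then show ?thesis using len_sref_comp_cases[OF True i]
      by (elim disjE) (simp_all add: Ls_inv_apply Ls_apply algebra_simps)
  qed
qed

lemma Ls_inv_Ls_inv:
  assumes h: "supported n h" and i: "1 \<le> i" "i < n"
  shows "Ls_inv n i (Ls_inv n i h) = (\<lambda>x. h x - (vinv - vv) * Ls_inv n i h x)"
proof
  fix x
  show "Ls_inv n i (Ls_inv n i h) x = h x - (vinv - vv) * Ls_inv n i h x"
  proof (cases "x \<in> Sn n")
    case False
    then show ?thesis using supportedD[OF h] Sn_sref_comp_iff[OF i, of x]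
      by (simp add: Ls_inv_apply)
  next
    case True
    then show ?thesis using len_sref_comp_cases[OF True i]
      by (elim disjE) (simp_all add: Ls_inv_apply Ls_apply algebra_simps)
  qed
qed

lemma foldr_Ls_inv_foldr_Ls_rev:
  "supported n g \<Longrightarrow> set xs \<subseteq> {1..<n} \<Longrightarrow> foldr (Ls_inv n) xs (foldr (Ls n) (rev xs) g) = g"
  by (induction xs arbitrary: g) (simp_all add: Ls_inv_Ls supported_Ls)

lemma foldr_Ls_rev_foldr_Ls_inv:
  "supported n g \<Longrightarrow> set xs \<subseteq> {1..<n} \<Longrightarrow> foldr (Ls n) (rev xs) (foldr (Ls_inv n) xs g) = g"
  by (induction xs arbitrary: g) (simp_all add: Ls_Ls_inv supported_foldr_Ls_inv)


section \<open>Independence of the reduced word\<close>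

lemma sref_comp_eq_comp_sref:
  assumes x: "x \<in> Sn n"
    and c: "x j = i \<and> x (Suc j) = Suc i \<or> x j = Suc i \<and> x (Suc j) = i"
  shows "sref i \<circ> x = x \<circ> sref j"
proof
  fix k
  show "(sref i \<circ> x) k = (x \<circ> sref j) k"
  proof (cases "k = j \<or> k = Suc j")
    case True
    then show ?thesis using c by (auto simp: sref_def)
  next
    case False
    then have "x k \<noteq> i" "x k \<noteq> Suc i" using c Sn_inj[OF x] by metis+
    then show ?thesis using False by (simp add: sref_def)
  qed
qed

lemma right_descent_sref_comp:
  assumes x: "x \<in> Sn n" and i: "1 \<le> i" "i < n" and j: "1 \<le> j" "j < n"
    and ne: "sref i \<circ> x \<noteq> x \<circ> sref j"
  shows "len n (sref i \<circ> x \<circ> sref j) < len n (sref i \<circ> x) \<longleftrightarrow> len n (x \<circ> sref j) < len n x"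
proof -
  have "sref i (x (Suc j)) < sref i (x j) \<longleftrightarrow> x (Suc j) < x j"
    using Sn_inj[OF x, of "Suc j" j] sref_comp_eq_comp_sref[OF x] ne
    by (intro sref_less_sref_iff) auto
  then show ?thesis
    using len_comp_sref_less_iff[OF Sn_sref_comp[OF i x] j] len_comp_sref_less_iff[OF x j] by simp
qed

lemma left_descent_comp_sref:
  assumes x: "x \<in> Sn n" and i: "1 \<le> i" "i < n" and j: "1 \<le> j" "j < n"
    and ne: "sref i \<circ> x \<noteq> x \<circ> sref j"
  shows "len n (sref i \<circ> (x \<circ> sref j)) < len n (x \<circ> sref j) \<longleftrightarrow> len n (sref i \<circ> x) < len n x"
proof -
  have ix: "inv x \<in> Sn n" by (rule Sn_inv[OF x])
  have ne': "inv x (Suc i) \<noteq> inv x i" using Sn_inj[OF ix, of "Suc i" i] by auto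
  have no_swap: "\<not> (inv x (Suc i) = j \<and> inv x i = Suc j)" "\<not> (inv x (Suc i) = Suc j \<and> inv x i = j)"
    using sref_comp_eq_comp_sref[OF x] ne Sn_apply_inv[OF x] by metis+
  have "sref j (inv x (Suc i)) < sref j (inv x i) \<longleftrightarrow> inv x (Suc i) < inv x i"
    using ne' no_swap by (rule sref_less_sref_iff)
  moreover have "sref j (inv x (Suc i)) \<noteq> sref j (inv x i)"
    using ne' by (metis sref_sref)
  ultimately show ?thesis
    using len_sref_comp_less_iff[OF Sn_comp_sref[OF j x] i] len_sref_comp_less_iff[OF x i]
      left_ascent_iff[OF Sn_comp_sref[OF j x]] left_ascent_iff[OF x] inv_comp_sref[OF x] ne'
    by auto
qed

lemma Ls_Rs:
  assumes h: "supported n h" and i: "1 \<le> i" "i < n" and j: "1 \<le> j" "j < n"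
  shows "Ls n i (Rs n j h) = Rs n j (Ls n i h)"
proof
  fix x
  show "Ls n i (Rs n j h) x = Rs n j (Ls n i h) x"
  proof (cases "x \<in> Sn n")
    case False
    then have "sref i \<circ> x \<notin> Sn n" "x \<circ> sref j \<notin> Sn n" "sref i \<circ> x \<circ> sref j \<notin> Sn n"
      using Sn_sref_comp_iff[OF i] Sn_comp_sref_iff[OF j] by simp_all
    then show ?thesis using False supportedD[OF h] by (simp add: Ls_apply Rs_apply o_assoc)
  next
    case x: True
    show ?thesis
    proof (cases "sref i \<circ> x = x \<circ> sref j")
      case True
      then have "sref i \<circ> x \<circ> sref j = x" by (metis comp_sref_sref)
      then show ?thesis using True by (simp add: Ls_apply Rs_apply o_assoc)
    next
      case False
      show ?thesis
        using right_descent_sref_comp[OF x i j False] left_descent_comp_sref[OF x i j False]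
        by (simp add: Ls_apply Rs_apply o_assoc algebra_simps)
    qed
  qed
qed

lemma foldr_Ls_foldr_Rs:
  assumes h: "supported n h" and xs: "set xs \<subseteq> {1..<n}" and js: "set js \<subseteq> {1..<n}"
  shows "foldr (Ls n) xs (foldr (Rs n) js h) = foldr (Rs n) js (foldr (Ls n) xs h)"
proof -
  have "foldr (Ls n) xs (Rs n j g) = Rs n j (foldr (Ls n) xs g)"
    if "supported n g" "1 \<le> j" "j < n" for g j
    using xs that by (induction xs) (auto simp: Ls_Rs supported_foldr_Ls)
  then show ?thesis
    using js h by (induction js) (auto simp: supported_foldr_Rs)
qed

lemma Ls_tb:
  assumes y: "y \<in> Sn n" and i: "1 \<le> i" "i < n" and l: "len n (sref i \<circ> y) = Suc (len n y)"
  shows "Ls n i (tb n y) = tb n (sref i \<circ> y)"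
proof
  fix x
  have "sref i \<circ> x = y \<longleftrightarrow> x = sref i \<circ> y" by auto
  then show "Ls n i (tb n y) x = tb n (sref i \<circ> y) x"
    using l y Sn_sref_comp[OF i y] by (auto simp: Ls_apply tb_def)
qed

lemma Rs_tb:
  assumes y: "y \<in> Sn n" and j: "1 \<le> j" "j < n" and l: "len n (y \<circ> sref j) = Suc (len n y)"
  shows "Rs n j (tb n y) = tb n (y \<circ> sref j)"
proof
  fix x
  have "x \<circ> sref j = y \<longleftrightarrow> x = y \<circ> sref j" by auto
  then show "Rs n j (tb n y) x = tb n (y \<circ> sref j) x"
    using l y Sn_comp_sref[OF j y] by (auto simp: Rs_apply tb_def)
qed

lemma foldr_Ls_tb_id: "reduced n xs \<Longrightarrow> foldr (Ls n) xs (tb n id) = tb n (wprod xs)"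
proof (induction xs)
  case (Cons i xs)
  have r: "reduced n xs" by (rule reduced_Cons[OF Cons.prems])
  then have "wprod xs \<in> Sn n" "1 \<le> i" "i < n"
    "len n (sref i \<circ> wprod xs) = Suc (len n (wprod xs))"
    using Cons.prems by (auto simp: reduced_def wprod_Sn)
  then have "Ls n i (tb n (wprod xs)) = tb n (sref i \<circ> wprod xs)" by (rule Ls_tb)
  then show ?case using Cons.IH[OF r] by (simp add: comp_def)
qed simp

lemma foldr_Rs_tb_id: "reduced n (rev ys) \<Longrightarrow> foldr (Rs n) ys (tb n id) = tb n (wprod (rev ys))"
proof (induction ys)
  case (Cons j ys)
  have "reduced n (j # ys)" using reduced_rev[OF Cons.prems] by simp
  then have r: "reduced n (rev ys)" by (rule reduced_rev[OF reduced_Cons])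
  then have "wprod (rev ys) \<in> Sn n" "1 \<le> j" "j < n"
    "len n (wprod (rev ys) \<circ> sref j) = Suc (len n (wprod (rev ys)))"
    using Cons.prems by (auto simp: reduced_def wprod_Sn wprod_append)
  then have "Rs n j (tb n (wprod (rev ys))) = tb n (wprod (rev ys) \<circ> sref j)" by (rule Rs_tb)
  then show ?case using Cons.IH[OF r] by (simp add: wprod_append comp_def)
qed simp

lemma foldr_Ls_reduced_indep:
  assumes xs: "reduced n xs" and ys: "reduced n ys" and w: "wprod xs = wprod ys"
    and g: "supported n g"
  shows "foldr (Ls n) xs g = foldr (Ls n) ys g"
proof -
  have sx: "set xs \<subseteq> {1..<n}" and sy: "set ys \<subseteq> {1..<n}" using xs ys by (auto simp: reduced_def)
  have on_basis: "foldr (Ls n) xs (tb n u) = foldr (Ls n) ys (tb n u)" if "u \<in> Sn n" for u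
  proof -
    define js where "js = rev (rw n u)"
    have js: "set js \<subseteq> {1..<n}" "tb n u = foldr (Rs n) js (tb n id)"
      using foldr_Rs_tb_id[of n js] reduced_rw[OF that] rw_spec[OF that] by (simp_all add: js_def)
    show ?thesis
      unfolding js(2) foldr_Ls_foldr_Rs[OF supported_tb sx js(1)] foldr_Ls_foldr_Rs[OF supported_tb sy js(1)]
      using foldr_Ls_tb_id[OF xs] foldr_Ls_tb_id[OF ys] w by simp
  qed
  have "foldr (Ls n) xs g = (\<lambda>x. \<Sum>u\<in>Sn n. g u * foldr (Ls n) xs (tb n u) x)"
    by (subst supported_expand[OF g]) (rule foldr_Ls_sum)
  also have "\<dots> = (\<lambda>x. \<Sum>u\<in>Sn n. g u * foldr (Ls n) ys (tb n u) x)"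
    using on_basis by simp
  also have "\<dots> = foldr (Ls n) ys g"
    by (subst (2) supported_expand[OF g]) (rule foldr_Ls_sum[symmetric])
  finally show ?thesis .
qed

lemma foldr_Ls_inv_reduced_indep:
  assumes xs: "reduced n xs" and ys: "reduced n ys" and w: "wprod xs = wprod ys"
    and g: "supported n g"
  shows "foldr (Ls_inv n) xs g = foldr (Ls_inv n) ys g"
proof -
  have sx: "set xs \<subseteq> {1..<n}" and sy: "set ys \<subseteq> {1..<n}" using xs ys by (auto simp: reduced_def)
  define f where "f = foldr (Ls_inv n) xs g"
  have f: "supported n f" unfolding f_def by (rule supported_foldr_Ls_inv[OF g sx])
  have "foldr (Ls n) (rev ys) f = foldr (Ls n) (rev xs) f"
    by (rule foldr_Ls_reduced_indep[OF reduced_rev[OF ys] reduced_rev[OF xs] _ f])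
      (simp add: wprod_rev w)
  also have "\<dots> = g" unfolding f_def by (rule foldr_Ls_rev_foldr_Ls_inv[OF g sx])
  finally have "foldr (Ls_inv n) ys g = foldr (Ls_inv n) ys (foldr (Ls n) (rev ys) f)" by simp
  also have "\<dots> = f" by (rule foldr_Ls_inv_foldr_Ls_rev[OF f sy])
  finally show ?thesis unfolding f_def by simp
qed

lemma barT_wprod:
  assumes "reduced n xs"
  shows "barT n (wprod xs) = foldr (Ls_inv n) xs (tb n id)"
proof -
  have w: "wprod xs \<in> Sn n" using assms by (simp add: reduced_def wprod_Sn)
  show ?thesis unfolding barT_eq_foldr_Ls_inv
    by (rule foldr_Ls_inv_reduced_indep[OF reduced_rw[OF w] assms _ supported_tb])
      (simp add: rw_spec[OF w])
qed

lemma Tw_wprod: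
  assumes "reduced n xs" and "supported n h"
  shows "Tw n (wprod xs) h = foldr (Ls n) xs h"
proof -
  have w: "wprod xs \<in> Sn n" using assms by (simp add: reduced_def wprod_Sn)
  show ?thesis unfolding Tw_def
    by (rule foldr_Ls_reduced_indep[OF reduced_rw[OF w] assms(1) _ assms(2)]) (simp add: rw_spec[OF w])
qed

lemma hmult_tb:
  assumes "c \<in> Sn n"
  shows "hmult n (tb n c) h = Tw n c h"
proof
  fix x
  have "hmult n (tb n c) h x = (\<Sum>w\<in>Sn n. if w = c then Tw n c h x else 0)"
    unfolding hmult_def by (rule sum.cong) (auto simp: tb_def)
  then show "hmult n (tb n c) h x = Tw n c h x" using assms by simp
qed


section \<open>The bar involution\<close>

lemma supported_barT:
  assumes mn: "m \<le> n" and w: "w \<in> Sn m"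
  shows "supported m (barT n w)"
proof -
  obtain xs where xs: "set xs \<subseteq> {1..<m}" "wprod xs = w" "length xs = len n w"
    using reduced_word_exists[OF mn w] by blast
  then have "reduced n xs" using mn by (auto simp: reduced_def)
  then have "barT n w = foldr (Ls_inv n) xs (tb n id)" using barT_wprod xs(2) by blast
  moreover have "supported m (tb n id)" by (simp add: supported_def tb_def)
  ultimately show ?thesis using supported_foldr_Ls_inv xs(1) by simp
qed

lemma len_le_of_foldr_Ls_inv_nonzero:
  "set xs \<subseteq> {1..<n} \<Longrightarrow> foldr (Ls_inv n) xs (tb n id) x \<noteq> 0 \<Longrightarrow> len n x \<le> length xs"
proof (induction xs arbitrary: x)
  case Nil
  then have "x = id" by (simp add: tb_def id_def split: if_splits)
  then show ?case by (simp only: len_id list.size(3) order_refl)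
next
  case (Cons i xs)
  then have i: "1 \<le> i" "i < n" and s: "set xs \<subseteq> {1..<n}" by auto
  define g where "g = foldr (Ls_inv n) xs (tb n id)"
  have g: "supported n g" unfolding g_def by (rule supported_foldr_Ls_inv[OF supported_tb s])
  have ne: "Ls_inv n i g x \<noteq> 0"
    using Cons.prems(2) unfolding g_def by (simp only: foldr.simps o_apply simp_thms)
  then have x: "x \<in> Sn n" using supportedD[OF supported_Ls_inv[OF g i]] by blast
  have IH: "g y \<noteq> 0 \<Longrightarrow> len n y \<le> length xs" for y
    using Cons.IH[OF s] unfolding g_def .
  have "g (sref i \<circ> x) \<noteq> 0 \<or> g x \<noteq> 0" using ne by (auto simp: Ls_inv_apply split: if_splits)
  then show ?case using IH[of "sref i \<circ> x"] IH[of x] len_sref_comp_cases[OF x i] by auto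
qed

lemma foldr_Ls_inv_top:
  "reduced n xs \<Longrightarrow> len n x = length xs \<Longrightarrow> foldr (Ls_inv n) xs (tb n id) x = tb n (wprod xs) x"
proof (induction xs arbitrary: x)
  case (Cons i xs)
  have r: "reduced n xs" by (rule reduced_Cons[OF Cons.prems(1)])
  have i: "1 \<le> i" "i < n" and s: "set xs \<subseteq> {1..<n}" and lw: "len n (wprod xs) = length xs"
    using Cons.prems(1) r by (auto simp: reduced_def)
  define g where "g = foldr (Ls_inv n) xs (tb n id)"
  have g: "supported n g" unfolding g_def by (rule supported_foldr_Ls_inv[OF supported_tb s])
  have g_zero: "g y = 0" if "length xs < len n y" for y
    using len_le_of_foldr_Ls_inv_nonzero[OF s, of y] that by (auto simp: g_def)
  have lhs: "foldr (Ls_inv n) (i # xs) (tb n id) x = g (sref i \<circ> x)"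
    using g_zero[of x] Cons.prems(2) by (simp add: g_def Ls_inv_apply)
  have "sref i \<circ> x = wprod xs \<longleftrightarrow> x = sref i \<circ> wprod xs" by (metis sref_sref_comp)
  then have rhs: "tb n (wprod (i # xs)) x = tb n (wprod xs) (sref i \<circ> x)"
    using wprod_Sn[OF s] Sn_sref_comp_iff[OF i] by (auto simp: tb_def)
  show ?case
  proof (cases "x \<in> Sn n \<and> len n (sref i \<circ> x) = length xs")
    case True
    then show ?thesis unfolding lhs rhs g_def using Cons.IH[OF r] by blast
  next
    case False
    then have "sref i \<circ> x \<notin> Sn n \<or> length xs < len n (sref i \<circ> x)"
      using len_sref_comp_cases[OF _ i, of x] Cons.prems(2) Sn_sref_comp_iff[OF i] by auto
    then have "g (sref i \<circ> x) = 0" using supportedD[OF g] g_zero by blast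
    moreover have "tb n (wprod xs) (sref i \<circ> x) = 0"
      using \<open>sref i \<circ> x \<notin> Sn n \<or> _\<close> lw wprod_Sn[OF s] by (auto simp: tb_def)
    ultimately show ?thesis unfolding lhs rhs by simp
  qed
qed simp

lemma barT_triangular:
  assumes w: "w \<in> Sn n" and "barT n w x \<noteq> 0"
  shows "len n x < len n w \<or> x = w"
proof -
  have "len n x \<le> len n w"
    using len_le_of_foldr_Ls_inv_nonzero[OF rw_spec(1)[OF w]] assms rw_spec(3)[OF w]
    by (simp add: barT_eq_foldr_Ls_inv)
  moreover have "x = w" if "len n x = len n w"
    using foldr_Ls_inv_top[OF reduced_rw[OF w]] that assms rw_spec[OF w]
    by (simp add: barT_eq_foldr_Ls_inv tb_def split: if_splits)
  ultimately show ?thesis by linarith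
qed

lemma barT_diag: "w \<in> Sn n \<Longrightarrow> barT n w w = 1"
  using foldr_Ls_inv_top[OF reduced_rw, of w n w] rw_spec[of w n]
  by (simp add: barT_eq_foldr_Ls_inv tb_def)

lemma hbar_apply: "hbar n h x = (\<Sum>w\<in>Sn n. lbar (h w) * barT n w x)"
  by (simp add: hbar_def)

lemma hbar_diff: "hbar n (\<lambda>x. a x - b x) = (\<lambda>x. hbar n a x - hbar n b x)"
  by (rule ext) (simp add: hbar_apply lbar_minus algebra_simps sum_subtractf)

lemma hbar_scale: "hbar n (\<lambda>x. c * a x) = (\<lambda>x. lbar c * hbar n a x)"
  by (rule ext) (simp add: hbar_apply lbar_mult sum_distrib_left algebra_simps)

lemma supported_hbar:
  assumes mn: "m \<le> n" and h: "supported m h"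
  shows "supported m (hbar n h)"
proof -
  have zero: "lbar (h w) * barT n w x = 0" if "x \<notin> Sn m" for w x
    using that supportedD[OF h, of w] supportedD[OF supported_barT[OF mn], of w x]
    by (cases "w \<in> Sn m") auto
  show ?thesis unfolding supported_def hbar_apply by (auto intro!: sum.neutral zero)
qed

text \<open>Since \<open>bar(t\<^sub>u)\<close> involves only \<open>t\<^sub>x\<close> with \<open>l(x) < l(u)\<close> besides \<open>t\<^sub>u\<close>, the bar image
  of \<open>h\<close> has the coefficient \<open>bar(h y)\<close> at an element \<open>y\<close> of maximal length in the support.\<close>

lemma hbar_apply_maximal:
  assumes y: "y \<in> Sn n" and max: "\<And>u. u \<in> Sn n \<Longrightarrow> h u \<noteq> 0 \<Longrightarrow> len n u \<le> len n y"
  shows "hbar n h y = lbar (h y)"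
proof -
  have "lbar (h u) * barT n u y = 0" if "u \<in> Sn n - {y}" for u
    using that max[of u] barT_triangular[of u n y] by (cases "h u = 0") auto
  then show ?thesis
    by (simp add: hbar_apply sum.remove[OF Sn_finite y] barT_diag[OF y] sum.neutral)
qed

lemma Ls_inv_barT:
  assumes u: "u \<in> Sn n" and i: "1 \<le> i" "i < n"
  shows "Ls_inv n i (barT n u) = (\<lambda>x. barT n (sref i \<circ> u) x +
            (if len n (sref i \<circ> u) < len n u then (vv - vinv) * barT n u x else 0))"
proof -
  have up: "barT n (sref i \<circ> v) = Ls_inv n i (barT n v)"
    if v: "v \<in> Sn n" and l: "len n (sref i \<circ> v) = Suc (len n v)" for v
  proof -
    have "reduced n (i # rw n v)" using rw_spec[OF v] i l by (simp add: reduced_def)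
    then have "barT n (wprod (i # rw n v)) = foldr (Ls_inv n) (i # rw n v) (tb n id)"
      by (rule barT_wprod)
    then show ?thesis using rw_spec(2)[OF v] unfolding barT_eq_foldr_Ls_inv[of n v] by simp
  qed
  show ?thesis
  proof (cases "len n (sref i \<circ> u) = Suc (len n u)")
    case True
    then show ?thesis using up[OF u] by simp
  next
    case False
    then have l: "len n u = Suc (len n (sref i \<circ> u))" using len_sref_comp_cases[OF u i] by simp
    have su: "sref i \<circ> u \<in> Sn n" by (rule Sn_sref_comp[OF i u])
    have "barT n u = Ls_inv n i (barT n (sref i \<circ> u))" using up[OF su] l by simp
    then show ?thesis
      using Ls_inv_Ls_inv[OF supported_barT[OF order_refl su] i] l by (simp add: algebra_simps)
  qed
qed

lemma hbar_Ls:
  assumes i: "1 \<le> i" "i < n"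
  shows "hbar n (Ls n i h) = Ls_inv n i (hbar n h)"
proof
  fix x
  define D where "D u = (if len n (sref i \<circ> u) < len n u then (vv - vinv) * lbar (h u) else 0) *
      barT n u x" for u
  have lbar_Ls: "lbar (Ls n i h u) = lbar (h (sref i \<circ> u)) +
      (if len n (sref i \<circ> u) < len n u then (vv - vinv) * lbar (h u) else 0)" for u
    by (simp add: Ls_apply lbar_add lbar_mult lbar_minus vv_eq_vpow vinv_eq_vpow)
  have reindex: "(\<Sum>u\<in>Sn n. lbar (h u) * barT n (sref i \<circ> u) x) =
      (\<Sum>u\<in>Sn n. lbar (h (sref i \<circ> u)) * barT n u x)"
    by (rule sum.reindex_bij_witness[where i="\<lambda>w. sref i \<circ> w" and j="\<lambda>w. sref i \<circ> w"])
      (auto simp: Sn_sref_comp[OF i])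
  have "Ls_inv n i (hbar n h) x = (\<Sum>u\<in>Sn n. lbar (h u) * Ls_inv n i (barT n u) x)"
    unfolding hbar_def Ls_inv_sum ..
  also have "\<dots> = (\<Sum>u\<in>Sn n. lbar (h u) * barT n (sref i \<circ> u) x) + sum D (Sn n)"
    unfolding sum.distrib[symmetric]
    by (rule sum.cong) (simp_all add: Ls_inv_barT[OF _ i] D_def algebra_simps)
  also have "\<dots> = hbar n (Ls n i h) x"
    unfolding reindex by (simp add: hbar_apply lbar_Ls D_def distrib_right sum.distrib)
  finally show "hbar n (Ls n i h) x = Ls_inv n i (hbar n h) x" ..
qed

lemma hbar_foldr_Ls:
  "set xs \<subseteq> {1..<n} \<Longrightarrow> hbar n (foldr (Ls n) xs h) = foldr (Ls_inv n) xs (hbar n h)"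
  by (induction xs) (auto simp: hbar_Ls)

lemma hbar_Ls_eigen:
  assumes i: "1 \<le> i" "i < n" and eigen: "Ls n i h = (\<lambda>x. vinv * h x)"
  shows "Ls n i (hbar n h) = (\<lambda>x. vinv * hbar n h x)"
proof -
  have "Ls_inv n i (hbar n h) = hbar n (Ls n i h)" by (rule hbar_Ls[OF i, symmetric])
  also have "\<dots> = (\<lambda>x. vv * hbar n h x)"
    by (simp add: eigen hbar_scale vinv_eq_vpow vv_eq_vpow)
  finally show ?thesis by (auto simp: fun_eq_iff Ls_inv_def hadd_def hscale_def algebra_simps)
qed


definition isKL :: "nat \<Rightarrow> perm \<Rightarrow> hecke \<Rightarrow> bool" where
  "isKL n w c \<longleftrightarrow> (\<forall>x. x \<notin> Sn n \<longrightarrow> c x = 0) \<and> hbar n c = c \<and> c w = 1 \<and>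
      (\<forall>y \<in> Sn n. y \<noteq> w \<longrightarrow> in_vZv (c y))"

lemma isKL_unique:
  assumes c: "isKL n w c" and c': "isKL n w c'"
  shows "c = c'"
proof (rule ccontr)
  assume "c \<noteq> c'"
  define d where "d x = c x - c' x" for x
  have d: "supported n d" "hbar n d = d" "d w = 0" "\<And>y. y \<in> Sn n \<Longrightarrow> y \<noteq> w \<Longrightarrow> in_vZv (d y)"
    using c c' unfolding d_def isKL_def supported_def by (simp_all add: hbar_diff in_vZv_diff)
  define S where "S = {y \<in> Sn n. d y \<noteq> 0}"
  have "S \<noteq> {}"
    using \<open>c \<noteq> c'\<close> supportedD[OF d(1)] by (auto simp: S_def d_def fun_eq_iff)
  moreover have "finite S" by (simp add: S_def)
  ultimately have "Max (len n ` S) \<in> len n ` S" by (intro Max_in) auto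
  then obtain y where y: "y \<in> S" "len n y = Max (len n ` S)" by (metis imageE)
  then have "hbar n d y = lbar (d y)"
    using Max_ge[of "len n ` S"] \<open>finite S\<close> by (intro hbar_apply_maximal) (auto simp: S_def)
  moreover have "y \<noteq> w" using y d(3) by (auto simp: S_def)
  ultimately have "d y = 0"
    using d(2,4) y(1) in_vZv_lbar_eq_zero by (metis S_def mem_Collect_eq)
  with y(1) show False by (simp add: S_def)
qed

lemma KL_eqI: "isKL n w c \<Longrightarrow> KL n w = c"
  unfolding KL_def using isKL_unique by (intro the_equality) (auto simp: isKL_def)


section \<open>The Kazhdan--Lusztig element of a longest element\<close>

definition Clongest :: "nat \<Rightarrow> nat \<Rightarrow> hecke" where
  "Clongest n m = (\<lambda>x. if x \<in> Sn n \<and> x \<in> Sn m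
     then vpow (int (len n (rev_perm m)) - int (len n x)) else 0)"

lemma Clongest_apply:
  "m \<le> n \<Longrightarrow> Clongest n m x = (if x \<in> Sn m then vpow (int (len n (rev_perm m)) - int (len n x)) else 0)"
  by (auto simp: Clongest_def Sn_mono)

lemma supported_Clongest: "supported m (Clongest n m)" "supported n (Clongest n m)"
  by (simp_all add: supported_def Clongest_def)

lemma Ls_Clongest:
  assumes mn: "m \<le> n" and i: "1 \<le> i" "i < m"
  shows "Ls n i (Clongest n m) = (\<lambda>x. vinv * Clongest n m x)"
proof
  fix x
  define L where "L = int (len n (rev_perm m))"
  show "Ls n i (Clongest n m) x = vinv * Clongest n m x"
  proof (cases "x \<in> Sn m")
    case False
    then show ?thesis using Sn_sref_comp_iff[OF i] by (simp add: Ls_apply Clongest_apply[OF mn])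
  next
    case True
    then have x: "x \<in> Sn n" "sref i \<circ> x \<in> Sn m" using Sn_mono[OF mn] Sn_sref_comp[OF i] by auto
    consider "len n (sref i \<circ> x) = Suc (len n x)" | "len n x = Suc (len n (sref i \<circ> x))"
      using len_sref_comp_cases[OF x(1)] i mn by fastforce
    then show ?thesis
      by cases (use True x in \<open>simp_all add: Ls_apply Clongest_apply[OF mn] L_def[symmetric]
          vv_eq_vpow vinv_eq_vpow vpow_mult algebra_simps\<close>)
  qed
qed

text \<open>Every element of \<open>S\<^sub>m\<close> is reached from \<open>w\<^sub>m\<close> by removing left ascents, each of which
  multiplies an eigenvector coefficient by \<open>v\<close>.\<close>

lemma Ls_eigen_unique:
  assumes mn: "m \<le> n" and h: "supported m h"
    and eigen: "\<And>i. 1 \<le> i \<Longrightarrow> i < m \<Longrightarrow> Ls n i h = (\<lambda>x. vinv * h x)"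
  shows "h = (\<lambda>x. h (rev_perm m) * Clongest n m x)"
proof -
  have coeff: "h x = vpow (int (len n (rev_perm m)) - int (len n x)) * h (rev_perm m)"
    if "x \<in> Sn m" for x
    using that
  proof (induction "len n (rev_perm m) - len n x" arbitrary: x rule: less_induct)
    case less
    show ?case
    proof (cases "x = rev_perm m")
      case False
      then obtain i where i: "1 \<le> i" "i < m" "left_ascent x i"
        using left_ascent_exists[OF less.prems] by blast
      have sx: "sref i \<circ> x \<in> Sn m" by (rule Sn_sref_comp[OF i(1,2) less.prems])
      have l: "len n (sref i \<circ> x) = Suc (len n x)"
        using len_sref_comp_left_ascent[OF Sn_mono[OF mn less.prems]] i mn by simp
      have "h (sref i \<circ> x) = vinv * h x"
        using fun_cong[OF eigen[OF i(1,2)], of x] l by (simp add: Ls_apply)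
      then have "h x = vv * h (sref i \<circ> x)"
        by (simp add: vv_mult_vinv mult.assoc[symmetric])
      also have "\<dots> = vv * vpow (int (len n (rev_perm m)) - int (len n x) - 1) * h (rev_perm m)"
        using less.hyps[OF _ sx] l len_le_rev_perm[OF mn sx] by (simp add: algebra_simps)
      finally show ?thesis by (simp add: vv_mult_vpow)
    qed simp
  qed
  show ?thesis
    using coeff supportedD[OF h] by (auto simp: Clongest_apply[OF mn] mult.commute)
qed

lemma hbar_Clongest:
  assumes mn: "m \<le> n"
  shows "hbar n (Clongest n m) = Clongest n m"
proof -
  define H where "H = hbar n (Clongest n m)"
  have "supported m H"
    unfolding H_def by (rule supported_hbar[OF mn supported_Clongest(1)])
  moreover have "Ls n i H = (\<lambda>x. vinv * H x)" if "1 \<le> i" "i < m" for i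
    unfolding H_def using that mn by (intro hbar_Ls_eigen Ls_Clongest) auto
  ultimately have "H = (\<lambda>x. H (rev_perm m) * Clongest n m x)" by (rule Ls_eigen_unique[OF mn])
  moreover have "H (rev_perm m) = 1"
  proof -
    have "H (rev_perm m) = lbar (Clongest n m (rev_perm m))"
      unfolding H_def
      by (rule hbar_apply_maximal[OF Sn_mono[OF mn rev_perm_Sn]])
        (auto simp: Clongest_apply[OF mn] len_le_rev_perm[OF mn] split: if_splits)
    then show ?thesis by (simp add: Clongest_apply[OF mn] rev_perm_Sn)
  qed
  ultimately show ?thesis by (simp add: H_def)
qed

lemma KL_longest_eq_Clongest:
  assumes mn: "m \<le> n"
  shows "KL n (longest n {1..<m}) = Clongest n m"
proof -
  have "in_vZv (Clongest n m y)" if "y \<noteq> rev_perm m" for y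
    using that len_le_rev_perm[OF mn, of y] eq_rev_perm_if_len_eq[OF mn, of y]
    by (auto simp: Clongest_apply[OF mn] le_less intro!: in_vZv_vpow)
  then have "isKL n (rev_perm m) (Clongest n m)"
    using hbar_Clongest[OF mn] rev_perm_Sn[of m] Sn_mono[OF mn]
    by (auto simp: isKL_def Clongest_apply[OF mn])
  then show ?thesis unfolding longest_eq_rev_perm[OF mn] by (rule KL_eqI)
qed


section \<open>Multiplying by the Coxeter element\<close>

lemma wprod_upt_apply:
  assumes "j \<le> n"
  shows "wprod [j..<n] k = (if k < j \<or> n < k then k else if k = n then j else Suc k)"
  using assms
proof (induction j rule: inc_induct)
  case (step j)
  then show ?case by (auto simp: upt_conv_Cons sref_def transpose_def)
qed simp

lemma len_wprod_upt_comp: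
  assumes n: "1 \<le> n" and y: "y \<in> Sn (n - 1)" and j: "1 \<le> j" "j \<le> n"
  shows "len n (wprod [j..<n] \<circ> y) = (n - j) + len n y"
  using j(2,1)
proof (induction j rule: inc_induct)
  case (step j)
  define z where "z = wprod [Suc j..<n] \<circ> y"
  have yn: "y \<in> Sn n" "y n = n" using y Sn_pred_iff[OF n] by simp_all
  have a: "inv y j \<in> {1..n - 1}" using step Sn_range[OF Sn_inv[OF y]] by auto
  have "len n (sref j \<circ> z) = Suc (len n z)"
  proof (rule len_sref_comp_up)
    show "z \<in> Sn n" unfolding z_def by (rule Sn_comp[OF wprod_Sn yn(1)]) auto
    show "z (inv y j) = j" "z n = Suc j"
      using step a yn Sn_apply_inv[OF y] by (simp_all add: z_def wprod_upt_apply)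
  qed (use step a in auto)
  then show ?case using step by (simp add: z_def upt_conv_Cons comp_def)
qed simp

lemma len_rev_perm_pred:
  assumes "1 \<le> n"
  shows "len n (rev_perm n) = len n (rev_perm (n - 1)) + (n - 1)"
proof -
  have "wprod [1..<n] \<circ> rev_perm (n - 1) = rev_perm n"
    using assms by (auto simp: fun_eq_iff wprod_upt_apply rev_perm_def)
  then show ?thesis using len_wprod_upt_comp[OF assms rev_perm_Sn, of 1] assms by simp
qed

lemma reduced_upt: "1 \<le> n \<Longrightarrow> reduced n [1..<n]"
  using len_wprod_upt_comp[of n id 1] by (simp add: reduced_def)

text \<open>The product \<open>t\<^sub>s\<^sub>k \<cdots> t\<^sub>s\<^sub>n\<^sub>-\<^sub>1 C'\<^sub>w\<^sub>I\<close> and its bar image (see \<open>foldr_Ls_upt_Clongest\<close> and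
  \<open>foldr_Ls_inv_upt_Clongest\<close>).\<close>

definition cyc_Clongest :: "nat \<Rightarrow> nat \<Rightarrow> hecke" where
  "cyc_Clongest n k = (\<lambda>x. if x \<in> Sn n \<and> x n = k
     then vpow (int (len n (rev_perm n)) + 1 - int k - int (len n x)) else 0)"

definition cyc_Clongest_bar :: "nat \<Rightarrow> nat \<Rightarrow> hecke" where
  "cyc_Clongest_bar n k = (\<lambda>x.
     if x \<in> Sn n \<and> x n = k then vpow (int (len n (rev_perm n)) + 1 - int k - int (len n x))
     else if x \<in> Sn n \<and> k < x n then (vv - vinv) * vpow (int (len n (rev_perm n)) - int k - int (len n x))
     else 0)"

lemma cyc_Clongest_last:
  assumes "1 \<le> n"
  shows "cyc_Clongest n n = Clongest n (n - 1)" "cyc_Clongest_bar n n = Clongest n (n - 1)"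
  using assms len_rev_perm_pred[OF assms] Sn_pred_iff[OF assms] Sn_range[of _ n n]
  by (fastforce simp: fun_eq_iff cyc_Clongest_def cyc_Clongest_bar_def Clongest_def)+

lemma len_sref_comp_last:
  assumes x: "x \<in> Sn n" and k: "1 \<le> k" "k < n"
  shows "x n = k \<Longrightarrow> len n x = Suc (len n (sref k \<circ> x))"
    and "x n = Suc k \<Longrightarrow> len n (sref k \<circ> x) = Suc (len n x)"
proof -
  have pos: "inv x v < n" if "v \<in> {1..n}" "x n \<noteq> v" for v
    using that Sn_range[OF Sn_inv[OF x] that(1)] Sn_apply_inv[OF x, of v]
    by (cases "inv x v = n") auto
  show "x n = k \<Longrightarrow> len n x = Suc (len n (sref k \<circ> x))"
    using pos[of "Suc k"] k by (intro len_sref_comp_down[OF x k Sn_apply_inv[OF x]]) auto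
  show "x n = Suc k \<Longrightarrow> len n (sref k \<circ> x) = Suc (len n x)"
    using pos[of k] k by (intro len_sref_comp_up[OF x k Sn_apply_inv[OF x]]) auto
qed

lemma Ls_cyc_Clongest:
  assumes k: "1 \<le> k" "k < n"
  shows "Ls n k (cyc_Clongest n (Suc k)) = cyc_Clongest n k"
proof
  fix x
  show "Ls n k (cyc_Clongest n (Suc k)) x = cyc_Clongest n k x"
  proof (cases "x \<in> Sn n")
    case False
    then show ?thesis using Sn_sref_comp_iff[OF k] by (simp add: Ls_apply cyc_Clongest_def)
  next
    case x: True
    then consider "x n = k" | "x n = Suc k" | "x n \<noteq> k" "x n \<noteq> Suc k" by blast
    then show ?thesis
      using len_sref_comp_last[OF x k] Sn_sref_comp[OF k x] x
      by cases (auto simp: Ls_apply cyc_Clongest_def sref_def algebra_simps)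
  qed
qed

lemma Ls_inv_cyc_Clongest_bar:
  assumes k: "1 \<le> k" "k < n"
  shows "Ls_inv n k (cyc_Clongest_bar n (Suc k)) = cyc_Clongest_bar n k"
proof
  fix x
  define L where "L = int (len n (rev_perm n)) - int k - int (len n x)"
  show "Ls_inv n k (cyc_Clongest_bar n (Suc k)) x = cyc_Clongest_bar n k x"
  proof (cases "x \<in> Sn n")
    case False
    then show ?thesis using Sn_sref_comp_iff[OF k] by (simp add: Ls_inv_apply cyc_Clongest_bar_def)
  next
    case x: True
    have sx: "sref k \<circ> x \<in> Sn n" by (rule Sn_sref_comp[OF k x])
    consider "x n = k" | "x n = Suc k" | "Suc k < x n" | "x n < k" by linarith
    then show ?thesis
    proof cases
      case 3
      have sxn: "(sref k \<circ> x) n = x n" using 3 by (simp add: sref_def)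
      have hx: "cyc_Clongest_bar n (Suc k) x = (vv - vinv) * vpow (L - 1)"
        using 3 x by (simp add: cyc_Clongest_bar_def L_def algebra_simps)
      have target: "cyc_Clongest_bar n k x = (vv - vinv) * vpow L"
        using 3 x by (simp add: cyc_Clongest_bar_def L_def)
      consider "len n (sref k \<circ> x) = Suc (len n x)" | "len n x = Suc (len n (sref k \<circ> x))"
        using len_sref_comp_cases[OF x k] by blast
      then show ?thesis
      proof cases
        case 1
        have "cyc_Clongest_bar n (Suc k) (sref k \<circ> x) = (vv - vinv) * vpow (L - 2)"
          using 1 3 sx sxn by (simp add: cyc_Clongest_bar_def L_def algebra_simps)
        moreover have "vpow (L - 2) + (vv - vinv) * vpow (L - 1) = vpow L"
          using vpow_add_vv_minus_vinv_mult[of "L - 1"] by simp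
        ultimately show ?thesis using 1 hx target by (simp add: Ls_inv_apply) (metis distrib_left)
      next
        case 2
        have "cyc_Clongest_bar n (Suc k) (sref k \<circ> x) = (vv - vinv) * vpow L"
          using 2 3 sx sxn by (simp add: cyc_Clongest_bar_def L_def algebra_simps)
        then show ?thesis using 2 target by (simp add: Ls_inv_apply)
      qed
    qed (use x sx len_sref_comp_last[OF x k] in
          \<open>auto simp: Ls_inv_apply cyc_Clongest_bar_def sref_def algebra_simps\<close>)
  qed
qed

lemma foldr_Ls_upt_Clongest:
  assumes "1 \<le> k" "k \<le> n"
  shows "foldr (Ls n) [k..<n] (Clongest n (n - 1)) = cyc_Clongest n k"
  using assms(2,1)
  by (induction k rule: inc_induct) (simp_all add: cyc_Clongest_last upt_conv_Cons Ls_cyc_Clongest)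

lemma foldr_Ls_inv_upt_Clongest:
  assumes "1 \<le> k" "k \<le> n"
  shows "foldr (Ls_inv n) [k..<n] (Clongest n (n - 1)) = cyc_Clongest_bar n k"
  using assms(2,1)
  by (induction k rule: inc_induct) (simp_all add: cyc_Clongest_last upt_conv_Cons Ls_inv_cyc_Clongest_bar)

lemma hmult_tb_wprod_upt_Clongest:
  assumes n: "1 \<le> n"
  shows "hmult n (tb n (wprod [1..<n])) (Clongest n (n - 1)) = cyc_Clongest n 1"
  using hmult_tb[OF wprod_Sn] Tw_wprod[OF reduced_upt[OF n] supported_Clongest(2)]
    foldr_Ls_upt_Clongest[of 1 n] n by simp

lemma hbar_cyc_Clongest:
  assumes n: "1 \<le> n"
  shows "hbar n (cyc_Clongest n 1) = cyc_Clongest_bar n 1"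
proof -
  have "hbar n (cyc_Clongest n 1) = hbar n (foldr (Ls n) [1..<n] (Clongest n (n - 1)))"
    using foldr_Ls_upt_Clongest[of 1 n] n by simp
  also have "\<dots> = foldr (Ls_inv n) [1..<n] (Clongest n (n - 1))"
    by (simp add: hbar_foldr_Ls hbar_Clongest)
  also have "\<dots> = cyc_Clongest_bar n 1"
    using foldr_Ls_inv_upt_Clongest[of 1 n] n by simp
  finally show ?thesis .
qed


section \<open>The Kazhdan--Lusztig element of \<open>s\<^sub>1 w\<^sub>0\<close>\<close>

definition Cs1w0 :: "nat \<Rightarrow> hecke" where
  "Cs1w0 n = (\<lambda>x. if x \<in> Sn n \<and> x n \<noteq> 1 then vpow (int (len n (rev_perm n)) - 1 - int (len n x)) else 0)"

lemma Cs1w0_eq: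
  assumes "1 \<le> n"
  shows "Cs1w0 n = hsub (hscale vinv (Clongest n n)) (hscale vinv (cyc_Clongest n 1))"
  by (auto simp: fun_eq_iff Cs1w0_def hsub_def hscale_def Clongest_def cyc_Clongest_def
      vinv_mult_vpow algebra_simps)

lemma hbar_Cs1w0:
  assumes n: "1 \<le> n"
  shows "hbar n (Cs1w0 n) = Cs1w0 n"
proof -
  have "hbar n (Cs1w0 n) = (\<lambda>x. vv * Clongest n n x - vv * cyc_Clongest_bar n 1 x)"
    unfolding Cs1w0_eq[OF n] hsub_def hscale_def hbar_diff hbar_scale hbar_cyc_Clongest[OF n]
      hbar_Clongest[OF order_refl]
    by (simp add: vinv_eq_vpow vv_eq_vpow)
  also have "\<dots> = Cs1w0 n"
  proof
    fix x
    define L where "L = int (len n (rev_perm n)) - int (len n x)"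
    have "vv * vpow L - vv * ((vv - vinv) * vpow (L - 1)) = vpow (L - 1)"
      by (simp add: algebra_simps vv_mult_vpow vinv_mult_vpow)
    moreover have "x n \<in> {1..n}" if "x \<in> Sn n" using n Sn_range[OF that, of n] by simp
    ultimately show "vv * Clongest n n x - vv * cyc_Clongest_bar n 1 x = Cs1w0 n x"
      by (auto simp: Clongest_def cyc_Clongest_bar_def Cs1w0_def L_def algebra_simps)
  qed
  finally show ?thesis .
qed

text \<open>The only elements of length at least \<open>l(w\<^sub>0) - 1\<close> are \<open>w\<^sub>0\<close>, with \<open>w\<^sub>0(n) = 1\<close>, and
  the \<open>s\<^sub>i w\<^sub>0\<close>; among these \<open>s\<^sub>1 w\<^sub>0\<close> is the only one with \<open>x(n) \<noteq> 1\<close>.\<close>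

lemma len_add_two_le_rev_perm:
  assumes n: "2 \<le> n" and y: "y \<in> Sn n" and yn: "y n \<noteq> 1" and ne: "y \<noteq> sref 1 \<circ> rev_perm n"
  shows "len n y + 2 \<le> len n (rev_perm n)"
proof -
  have w0n: "rev_perm n n = 1" using n by (simp add: rev_perm_def)
  have "y \<noteq> rev_perm n" using yn w0n by auto
  then have neq: "len n y \<noteq> len n (rev_perm n)" using eq_rev_perm_if_len_eq[OF order_refl y] by auto
  have "Suc (len n y) \<noteq> len n (rev_perm n)"
  proof
    assume l: "Suc (len n y) = len n (rev_perm n)"
    obtain i where i: "1 \<le> i" "i < n" "left_ascent y i"
      using left_ascent_exists[OF y \<open>y \<noteq> rev_perm n\<close>] by blast
    have "sref i \<circ> y = rev_perm n"
      using eq_rev_perm_if_len_eq[OF order_refl Sn_sref_comp[OF i(1,2) y]]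
        len_sref_comp_left_ascent[OF y i] l by simp
    then have y_eq: "y = sref i \<circ> rev_perm n" by (metis sref_sref_comp)
    then have "i = 1" using yn i w0n by (auto simp: sref_def transpose_def split: if_splits)
    then show False using y_eq ne by simp
  qed
  then show ?thesis using len_le_rev_perm[OF order_refl y] neq by linarith
qed

lemma isKL_Cs1w0:
  assumes n: "2 \<le> n"
  shows "isKL n (sref 1 \<circ> rev_perm n) (Cs1w0 n)"
proof -
  have w: "sref 1 \<circ> rev_perm n \<in> Sn n" using n by (intro Sn_sref_comp rev_perm_Sn) auto
  have "(sref 1 \<circ> rev_perm n) n = 2" using n by (simp add: rev_perm_def sref_def)
  moreover have "len n (rev_perm n) = Suc (len n (sref 1 \<circ> rev_perm n))"
    using n by (intro len_sref_comp_down[OF rev_perm_Sn, of _ _ "n - 1" n]) (auto simp: rev_perm_def)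
  moreover have "in_vZv (Cs1w0 n y)" if "y \<in> Sn n" "y \<noteq> sref 1 \<circ> rev_perm n" for y
    using len_add_two_le_rev_perm[OF n that(1) _ that(2)]
    by (auto simp: Cs1w0_def intro!: in_vZv_vpow)
  ultimately show ?thesis
    using w hbar_Cs1w0[of n] n by (auto simp: isKL_def Cs1w0_def)
qed

theorem lemma4p2:
  fixes n :: nat
  assumes "n \<ge> 2"
  shows "KL n (sref 1 \<circ> longest n {1..<n}) =
           hsub (hscale vinv (KL n (longest n {1..<n})))
                (hscale vinv (hmult n (tb n (wprod [1..<n])) (KL n (longest n {1..<n-1}))))"
proof -
  have n: "1 \<le> n" using assms by simp
  have "KL n (sref 1 \<circ> longest n {1..<n}) = Cs1w0 n"
    unfolding longest_eq_rev_perm[OF order_refl] by (rule KL_eqI[OF isKL_Cs1w0[OF assms]])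
  also have "\<dots> = hsub (hscale vinv (Clongest n n))
                (hscale vinv (hmult n (tb n (wprod [1..<n])) (Clongest n (n - 1))))"
    unfolding Cs1w0_eq[OF n] hmult_tb_wprod_upt_Clongest[OF n] ..
  finally show ?thesis
    unfolding KL_longest_eq_Clongest[OF order_refl] KL_longest_eq_Clongest[OF diff_le_self] .
qed

end
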